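(* For a cograph $\mathcal{C}$ the following are equivalent: (1) $\mathcal{C}$ is a PL-cograph; (2) for every edge value $e$ and every two distinct pairs $\{P,Q\}\neq\{R,S\}$ with $\mathcal{C}(P,Q)=\mathcal{C}(R,S)=e$, every pair of distinct points of the (3- or 4-element) set $\{P,Q,R,S\}$ has edge value $e$; (3) every block of $\mathcal{C}$ is a complete graph; (4) any two distinct blocks of $\mathcal{C}$ have at most one vertex in common.
   Context: A cograph is a function $\mathcal{C}$ assigning to each unordered pair $\{P,Q\}$ of distinct elements of a point set a value $\mathcal{C}(P,Q)$ (an edge). A PL-cograph is a cograph satisfying: (1a) for distinct points $P,Q,R$, if $\mathcal{C}(P,Q)=\mathcal{C}(Q,R)$ then $\mathcal{C}(P,Q)=\mathcal{C}(P,R)$; (1b) for distinct points $P,Q,R,S$, if $\mathcal{C}(P,Q)=\mathcal{C}(R,S)$ then $\mathcal{C}(P,Q)=\mathcal{C}(P,R)=\mathcal{C}(P,S)=\mathcal{C}(Q,R)=\mathcal{C}(Q,S)$. For an edge value $e$, the block of $e$ is the graph whose vertices are all points lying in some pair with value $e$ and whose edges are exactly the pairs with value $e$; it is complete if every two of its vertices form a pair with value $e$. *)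

theory Defs
  imports Main
begin

text \<open>A cograph on the point set V: a value C P Q for every pair of distinct points,
  depending only on the unordered pair (modelled as a symmetric function on V;
  its values on the diagonal are irrelevant).\<close>
definition cograph :: "'a set \<Rightarrow> ('a \<Rightarrow> 'a \<Rightarrow> 'b) \<Rightarrow> bool" where
  "cograph V C \<longleftrightarrow> (\<forall>P\<in>V. \<forall>Q\<in>V. P \<noteq> Q \<longrightarrow> C P Q = C Q P)"

definition PL_cograph :: "'a set \<Rightarrow> ('a \<Rightarrow> 'a \<Rightarrow> 'b) \<Rightarrow> bool" where
  "PL_cograph V C \<longleftrightarrow> cograph V C \<and>
     (\<forall>P\<in>V. \<forall>Q\<in>V. \<forall>R\<in>V. distinct [P, Q, R] \<longrightarrow> C P Q = C Q R \<longrightarrow> C P Q = C P R) \<and>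
     (\<forall>P\<in>V. \<forall>Q\<in>V. \<forall>R\<in>V. \<forall>S\<in>V. distinct [P, Q, R, S] \<longrightarrow> C P Q = C R S \<longrightarrow>
        C P Q = C P R \<and> C P Q = C P S \<and> C P Q = C Q R \<and> C P Q = C Q S)"

definition edge_values :: "'a set \<Rightarrow> ('a \<Rightarrow> 'a \<Rightarrow> 'b) \<Rightarrow> 'b set" where
  "edge_values V C = {C P Q | P Q. P \<in> V \<and> Q \<in> V \<and> P \<noteq> Q}"

definition block_verts :: "'a set \<Rightarrow> ('a \<Rightarrow> 'a \<Rightarrow> 'b) \<Rightarrow> 'b \<Rightarrow> 'a set" where
  "block_verts V C e = {P \<in> V. \<exists>Q\<in>V. Q \<noteq> P \<and> C P Q = e}"

definition block_edges :: "'a set \<Rightarrow> ('a \<Rightarrow> 'a \<Rightarrow> 'b) \<Rightarrow> 'b \<Rightarrow> 'a set set" where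
  "block_edges V C e = {{P, Q} | P Q. P \<in> V \<and> Q \<in> V \<and> P \<noteq> Q \<and> C P Q = e}"

definition block :: "'a set \<Rightarrow> ('a \<Rightarrow> 'a \<Rightarrow> 'b) \<Rightarrow> 'b \<Rightarrow> 'a set \<times> 'a set set" where
  "block V C e = (block_verts V C e, block_edges V C e)"

definition complete_block :: "'a set \<Rightarrow> ('a \<Rightarrow> 'a \<Rightarrow> 'b) \<Rightarrow> 'b \<Rightarrow> bool" where
  "complete_block V C e \<longleftrightarrow>
     (\<forall>P\<in>block_verts V C e. \<forall>Q\<in>block_verts V C e. P \<noteq> Q \<longrightarrow> {P, Q} \<in> block_edges V C e)"

end

theory Submission
  imports Defs
begin

text \<open>All four conditions are equivalent to the statement that every block is a clique in the
  strong sense that any two distinct vertices of the block of \<open>e\<close> span an edge of value \<open>e\<close>.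
  A PL-cograph has this property: two vertices \<open>P, Q\<close> of the block of \<open>e\<close> lie on edges
  \<open>{P, P'}\<close>, \<open>{Q, Q'}\<close> of value \<open>e\<close>, and axiom (1a) or (1b), according to whether these
  edges share a point, forces \<open>C P Q = e\<close>. Conversely, cliques give (1a), (1b) and (2) at once,
  and two distinct blocks sharing two vertices would assign two values to the same pair.\<close>

definition all_blocks_cliques :: "'a set \<Rightarrow> ('a \<Rightarrow> 'a \<Rightarrow> 'b) \<Rightarrow> bool" where
  "all_blocks_cliques V C \<longleftrightarrow>
     (\<forall>e. \<forall>P\<in>block_verts V C e. \<forall>Q\<in>block_verts V C e. P \<noteq> Q \<longrightarrow> C P Q = e)"

lemma cograph_sym: "cograph V C \<Longrightarrow> P \<in> V \<Longrightarrow> Q \<in> V \<Longrightarrow> P \<noteq> Q \<Longrightarrow> C P Q = C Q P"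
  unfolding cograph_def by blast

lemma block_edges_iff:
  assumes "cograph V C" "P \<in> V" "Q \<in> V" "P \<noteq> Q"
  shows "{P, Q} \<in> block_edges V C e \<longleftrightarrow> C P Q = e"
proof
  assume "{P, Q} \<in> block_edges V C e"
  then obtain A B where "{P, Q} = {A, B}" "A \<in> V" "B \<in> V" "A \<noteq> B" "C A B = e"
    unfolding block_edges_def by blast
  then show "C P Q = e"
    using assms unfolding cograph_def doubleton_eq_iff by metis
next
  assume "C P Q = e"
  then show "{P, Q} \<in> block_edges V C e"
    using assms unfolding block_edges_def by blast
qed

lemma block_verts_memE:
  assumes "P \<in> block_verts V C e"
  obtains P' where "P \<in> V" "P' \<in> V" "P' \<noteq> P" "C P P' = e"
  using assms unfolding block_verts_def by blast

lemma fst_mem_block_verts: "P \<in> V \<Longrightarrow> Q \<in> V \<Longrightarrow> P \<noteq> Q \<Longrightarrow> P \<in> block_verts V C (C P Q)"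
  unfolding block_verts_def by auto

lemma snd_mem_block_verts:
  "cograph V C \<Longrightarrow> P \<in> V \<Longrightarrow> Q \<in> V \<Longrightarrow> P \<noteq> Q \<Longrightarrow> Q \<in> block_verts V C (C P Q)"
  using fst_mem_block_verts[of Q V P C] cograph_sym[of V C P Q] by simp

lemma edge_values_block_verts: "P \<in> block_verts V C e \<Longrightarrow> e \<in> edge_values V C"
  unfolding block_verts_def edge_values_def by blast

lemma block_verts_of_equal_edges:
  assumes "cograph V C" "P \<in> V" "Q \<in> V" "R \<in> V" "S \<in> V" "P \<noteq> Q" "R \<noteq> S"
    and "C P Q = C R S"
  shows "{P, Q, R, S} \<subseteq> block_verts V C (C P Q)"
  using fst_mem_block_verts[of P V Q C] snd_mem_block_verts[OF assms(1), of P Q]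
    fst_mem_block_verts[of R V S C] snd_mem_block_verts[OF assms(1), of R S] assms(2-)
  by simp

lemma all_blocks_cliquesD:
  "all_blocks_cliques V C \<Longrightarrow> P \<in> block_verts V C e \<Longrightarrow> Q \<in> block_verts V C e \<Longrightarrow> P \<noteq> Q
   \<Longrightarrow> C P Q = e"
  unfolding all_blocks_cliques_def by blast

lemma complete_block_iff:
  assumes "cograph V C"
  shows "complete_block V C e \<longleftrightarrow>
    (\<forall>P\<in>block_verts V C e. \<forall>Q\<in>block_verts V C e. P \<noteq> Q \<longrightarrow> C P Q = e)"
proof -
  have "block_verts V C e \<subseteq> V"
    unfolding block_verts_def by blast
  then show ?thesis
    unfolding complete_block_def using block_edges_iff[OF assms] by (meson subsetD)
qed

lemma all_complete_blocks_iff_all_blocks_cliques: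
  assumes "cograph V C"
  shows "(\<forall>e\<in>edge_values V C. complete_block V C e) \<longleftrightarrow> all_blocks_cliques V C"
  unfolding all_blocks_cliques_def complete_block_iff[OF assms]
  by (meson edge_values_block_verts)

lemma PL_cographD_path:
  "PL_cograph V C \<Longrightarrow> P \<in> V \<Longrightarrow> Q \<in> V \<Longrightarrow> R \<in> V \<Longrightarrow> distinct [P, Q, R]
   \<Longrightarrow> C P Q = C Q R \<Longrightarrow> C P Q = C P R"
  unfolding PL_cograph_def by blast

lemma PL_cographD_disjoint:
  "PL_cograph V C \<Longrightarrow> P \<in> V \<Longrightarrow> Q \<in> V \<Longrightarrow> R \<in> V \<Longrightarrow> S \<in> V \<Longrightarrow> distinct [P, Q, R, S]
   \<Longrightarrow> C P Q = C R S \<Longrightarrow> C P Q = C P R"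
  unfolding PL_cograph_def by blast

lemma PL_cograph_join_equal_edges:
  assumes PL: "PL_cograph V C"
    and in_V: "P \<in> V" "P' \<in> V" "Q \<in> V" "Q' \<in> V"
    and ne: "P \<noteq> P'" "Q \<noteq> Q'" "P \<noteq> Q"
    and equal: "C P P' = C Q Q'"
  shows "C P Q = C P P'"
proof -
  have "cograph V C"
    using PL unfolding PL_cograph_def by blast
  note sym = cograph_sym[OF this]
  consider "P' = Q" | "Q' = P" | "P' = Q'" "P' \<noteq> Q" "Q' \<noteq> P" | "distinct [P, P', Q, Q']"
    using ne by auto
  then show ?thesis
  proof cases
    case 1
    then show ?thesis by simp
  next
    case 2
    then show ?thesis
      using equal sym[of P Q] in_V ne by simp
  next
    case 3
    have "C Q P' = C P' P"
      using equal sym[of P P'] in_V ne \<open>P' = Q'\<close> by simp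
    then have "C Q P' = C Q P"
      using PL_cographD_path[OF PL, of Q P' P] in_V ne 3 by simp
    then show ?thesis
      using equal sym[of P Q] in_V ne \<open>P' = Q'\<close> by simp
  next
    case 4
    then show ?thesis
      using PL_cographD_disjoint[OF PL, of P P' Q Q'] in_V equal by simp
  qed
qed

lemma PL_cograph_iff_all_blocks_cliques:
  assumes "cograph V C"
  shows "PL_cograph V C \<longleftrightarrow> all_blocks_cliques V C"
proof
  assume PL: "PL_cograph V C"
  show "all_blocks_cliques V C"
    unfolding all_blocks_cliques_def
  proof (intro allI ballI impI)
    fix e P Q
    assume P: "P \<in> block_verts V C e" and Q: "Q \<in> block_verts V C e" and "P \<noteq> Q"
    obtain P' where p: "P \<in> V" "P' \<in> V" "P' \<noteq> P" "C P P' = e" using P by (rule block_verts_memE)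
    obtain Q' where q: "Q \<in> V" "Q' \<in> V" "Q' \<noteq> Q" "C Q Q' = e" using Q by (rule block_verts_memE)
    show "C P Q = e"
      using PL_cograph_join_equal_edges[OF PL p(1,2) q(1,2)] p q \<open>P \<noteq> Q\<close> by simp
  qed
next
  assume cliques: "all_blocks_cliques V C"
  show "PL_cograph V C"
    unfolding PL_cograph_def
  proof (intro conjI ballI impI)
    fix P Q R
    assume "P \<in> V" "Q \<in> V" "R \<in> V" "distinct [P, Q, R]" "C P Q = C Q R"
    then have "{P, Q, R} \<subseteq> block_verts V C (C P Q)"
      using block_verts_of_equal_edges[OF assms, of P Q Q R] by simp
    then show "C P Q = C P R"
      using all_blocks_cliquesD[OF cliques, of P "C P Q" R] \<open>distinct [P, Q, R]\<close> by auto
  next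
    fix P Q R S
    assume "P \<in> V" "Q \<in> V" "R \<in> V" "S \<in> V" "distinct [P, Q, R, S]" "C P Q = C R S"
    then have "{P, Q, R, S} \<subseteq> block_verts V C (C P Q)"
      using block_verts_of_equal_edges[OF assms, of P Q R S] by simp
    then have same_value: "C P Q = C X Y"
      if "X \<in> {P, Q, R, S}" "Y \<in> {P, Q, R, S}" "X \<noteq> Y" for X Y
      using all_blocks_cliquesD[OF cliques] that by (metis subsetD)
    show "C P Q = C P R" "C P Q = C P S" "C P Q = C Q R" "C P Q = C Q S"
      using \<open>distinct [P, Q, R, S]\<close> by (auto intro!: same_value)
  qed (rule assms)
qed

lemma all_blocks_cliques_iff_edge_pairs_span_clique:
  assumes "cograph V C"
  shows "all_blocks_cliques V C \<longleftrightarrow>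
    (\<forall>e\<in>edge_values V C. \<forall>P\<in>V. \<forall>Q\<in>V. \<forall>R\<in>V. \<forall>S\<in>V.
       P \<noteq> Q \<longrightarrow> R \<noteq> S \<longrightarrow> {P, Q} \<noteq> {R, S} \<longrightarrow> C P Q = e \<longrightarrow> C R S = e \<longrightarrow>
       (\<forall>X\<in>{P, Q, R, S}. \<forall>Y\<in>{P, Q, R, S}. X \<noteq> Y \<longrightarrow> C X Y = e))"
  (is "_ \<longleftrightarrow> ?pairs")
proof
  assume cliques: "all_blocks_cliques V C"
  show ?pairs
  proof (intro ballI impI)
    fix e P Q R S X Y
    assume "P \<in> V" "Q \<in> V" "R \<in> V" "S \<in> V" "P \<noteq> Q" "R \<noteq> S" "C P Q = e" "C R S = e"
    then have "{P, Q, R, S} \<subseteq> block_verts V C e"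
      using block_verts_of_equal_edges[OF assms, of P Q R S] by simp
    then show "X \<in> {P, Q, R, S} \<Longrightarrow> Y \<in> {P, Q, R, S} \<Longrightarrow> X \<noteq> Y \<Longrightarrow> C X Y = e"
      using all_blocks_cliquesD[OF cliques] by (meson subsetD)
  qed
next
  assume pairs: ?pairs
  show "all_blocks_cliques V C"
    unfolding all_blocks_cliques_def
  proof (intro allI ballI impI)
    fix e P Q
    assume P: "P \<in> block_verts V C e" and Q: "Q \<in> block_verts V C e" and "P \<noteq> Q"
    obtain P' where p: "P \<in> V" "P' \<in> V" "P' \<noteq> P" "C P P' = e" using P by (rule block_verts_memE)
    obtain Q' where q: "Q \<in> V" "Q' \<in> V" "Q' \<noteq> Q" "C Q Q' = e" using Q by (rule block_verts_memE)
    show "C P Q = e"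
    proof (cases "{P, P'} = {Q, Q'}")
      case True
      then have "P' = Q" using \<open>P \<noteq> Q\<close> by (auto simp: doubleton_eq_iff)
      then show ?thesis using p by simp
    next
      case False
      then show ?thesis
        using pairs edge_values_block_verts[OF P] p q \<open>P \<noteq> Q\<close> by (metis insertI1 insertI2)
    qed
  qed
qed

lemma all_blocks_cliques_iff_blocks_share_at_most_one_vertex:
  assumes "cograph V C"
  shows "all_blocks_cliques V C \<longleftrightarrow>
    (\<forall>e\<in>edge_values V C. \<forall>f\<in>edge_values V C. block V C e \<noteq> block V C f \<longrightarrow>
       (\<forall>X\<in>block_verts V C e \<inter> block_verts V C f.
          \<forall>Y\<in>block_verts V C e \<inter> block_verts V C f. X = Y))"
  (is "_ \<longleftrightarrow> ?share")
proof
  assume cliques: "all_blocks_cliques V C"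
  show ?share
  proof (intro ballI impI)
    fix e f X Y
    assume "block V C e \<noteq> block V C f"
      and X: "X \<in> block_verts V C e \<inter> block_verts V C f"
      and Y: "Y \<in> block_verts V C e \<inter> block_verts V C f"
    then have "e \<noteq> f"
      by auto
    then show "X = Y"
      using all_blocks_cliquesD[OF cliques, of X e Y] all_blocks_cliquesD[OF cliques, of X f Y] X Y
      by auto
  qed
next
  assume share: ?share
  show "all_blocks_cliques V C"
    unfolding all_blocks_cliques_def
  proof (intro allI ballI impI)
    fix e P Q
    assume P: "P \<in> block_verts V C e" and Q: "Q \<in> block_verts V C e" and "P \<noteq> Q"
    obtain P' where p: "P \<in> V" "P' \<in> V" "P' \<noteq> P" "C P P' = e" using P by (rule block_verts_memE)
    have "Q \<in> V" using Q by (rule block_verts_memE)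
    show "C P Q = e"
    proof (rule ccontr)
      assume "C P Q \<noteq> e"
      then have "{P, P'} \<in> block_edges V C e" "{P, P'} \<notin> block_edges V C (C P Q)"
        using block_edges_iff[OF assms p(1,2)] p by auto
      then have "block V C e \<noteq> block V C (C P Q)"
        unfolding block_def by auto
      moreover have "P \<in> block_verts V C (C P Q)" "Q \<in> block_verts V C (C P Q)"
        using fst_mem_block_verts snd_mem_block_verts[OF assms] p \<open>Q \<in> V\<close> \<open>P \<noteq> Q\<close> by auto
      ultimately show False
        using share edge_values_block_verts P Q \<open>P \<noteq> Q\<close> by (meson IntI)
    qed
  qed
qed

theorem proposition5p1:
  fixes V :: "'a set" and C :: "'a \<Rightarrow> 'a \<Rightarrow> 'b"
  assumes "cograph V C"
  defines "c1 \<equiv> PL_cograph V C"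
    and "c2 \<equiv> (\<forall>e\<in>edge_values V C. \<forall>P\<in>V. \<forall>Q\<in>V. \<forall>R\<in>V. \<forall>S\<in>V.
               P \<noteq> Q \<longrightarrow> R \<noteq> S \<longrightarrow> {P, Q} \<noteq> {R, S} \<longrightarrow> C P Q = e \<longrightarrow> C R S = e \<longrightarrow>
               (\<forall>X\<in>{P, Q, R, S}. \<forall>Y\<in>{P, Q, R, S}. X \<noteq> Y \<longrightarrow> C X Y = e))"
    and "c3 \<equiv> (\<forall>e\<in>edge_values V C. complete_block V C e)"
    and "c4 \<equiv> (\<forall>e\<in>edge_values V C. \<forall>f\<in>edge_values V C. block V C e \<noteq> block V C f \<longrightarrow>
               (\<forall>X\<in>block_verts V C e \<inter> block_verts V C f.
                  \<forall>Y\<in>block_verts V C e \<inter> block_verts V C f. X = Y))"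
  shows "(c1 \<longleftrightarrow> c2) \<and> (c1 \<longleftrightarrow> c3) \<and> (c1 \<longleftrightarrow> c4)"
proof -
  have "c1 \<longleftrightarrow> all_blocks_cliques V C"
    unfolding c1_def by (rule PL_cograph_iff_all_blocks_cliques[OF assms(1)])
  moreover have "c2 \<longleftrightarrow> all_blocks_cliques V C"
    unfolding c2_def by (rule all_blocks_cliques_iff_edge_pairs_span_clique[OF assms(1), symmetric])
  moreover have "c3 \<longleftrightarrow> all_blocks_cliques V C"
    unfolding c3_def by (rule all_complete_blocks_iff_all_blocks_cliques[OF assms(1)])
  moreover have "c4 \<longleftrightarrow> all_blocks_cliques V C"
    unfolding c4_def
    by (rule all_blocks_cliques_iff_blocks_share_at_most_one_vertex[OF assms(1), symmetric])
  ultimately show ?thesis by blast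
qed

end
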